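(* Let $n\ge 1$. The number of disjoint preference profiles with $n$ men and $n$ women is at most $(n^2)!$ and is divisible by $(n!)^2$.
   Context: A preference profile for $n$ men and $n$ women consists of, for each man, a strict ranking of the $n$ women (a bijection from the women to $\{1,\dots,n\}$, where $1$ is his favorite), and for each woman, a strict ranking of the $n$ men (a bijection from the men to $\{1,\dots,n\}$). Men and women are labeled, so there are $(n!)^{2n}$ profiles. For a man $M$ and woman $W$, their mutual ranking is the ordered pair $(i,j)$ where $i$ is the rank $M$ gives $W$ and $j$ is the rank $W$ gives $M$. A profile is disjoint if each ordered pair $(i,j)\in\{1,\dots,n\}^2$ occurs as the mutual ranking of exactly one of the $n^2$ man–woman pairs. *)

theory Defs
  imports Main "HOL-Library.FuncSet"
begin

text \<open>A ranking of n objects is a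
bijection from {0..<n} to {1..n} (1 = favourite), taken extensional
(value undefined outside {0..<n}) so that profiles are counted exactly.\<close>

definition rankings :: "nat \<Rightarrow> (nat \<Rightarrow> nat) set" where
  "rankings n = {r \<in> {0..<n} \<rightarrow>\<^sub>E {1..n}. bij_betw r {0..<n} {1..n}}"

text \<open>A profile is a pair (M, W): M i j = rank man i gives woman j,
W j i = rank woman j gives man i.\<close>

definition profiles :: "nat \<Rightarrow> ((nat \<Rightarrow> nat \<Rightarrow> nat) \<times> (nat \<Rightarrow> nat \<Rightarrow> nat)) set" where
  "profiles n = ({0..<n} \<rightarrow>\<^sub>E rankings n) \<times> ({0..<n} \<rightarrow>\<^sub>E rankings n)"

definition mutual_ranking :: "(nat \<Rightarrow> nat \<Rightarrow> nat) \<times> (nat \<Rightarrow> nat \<Rightarrow> nat) \<Rightarrow> nat \<Rightarrow> nat \<Rightarrow> nat \<times> nat" where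
  "mutual_ranking P i j = (fst P i j, snd P j i)"

definition disjoint_profile :: "nat \<Rightarrow> (nat \<Rightarrow> nat \<Rightarrow> nat) \<times> (nat \<Rightarrow> nat \<Rightarrow> nat) \<Rightarrow> bool" where
  "disjoint_profile n P \<longleftrightarrow>
     (\<forall>a\<in>{1..n}. \<forall>b\<in>{1..n}. \<exists>!ij. ij \<in> {0..<n} \<times> {0..<n} \<and> case_prod (mutual_ranking P) ij = (a, b))"

end

theory Submission
  imports Defs "HOL-Combinatorics.Permutations"
begin

text \<open>A profile is determined by its table of mutual rankings on the grid of man-woman
pairs, and it is disjoint exactly when this table is a bijection from the grid onto
{1..n} \<times> {1..n}; there are (n^2)! such bijections. Relabelling the men and the women
by a pair of permutations maps disjoint profiles to disjoint profiles, and since the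
table of a disjoint profile is injective, no nontrivial relabelling fixes it. So the
disjoint profiles split into orbits of exactly (n!)^2 elements each.\<close>

lemma bij_betw_iff_ex1:
  assumes "f ` A \<subseteq> B"
  shows "bij_betw f A B \<longleftrightarrow> (\<forall>y \<in> B. \<exists>!x. x \<in> A \<and> f x = y)"
proof
  assume "bij_betw f A B"
  then show "\<forall>y \<in> B. \<exists>!x. x \<in> A \<and> f x = y"
    unfolding bij_betw_def inj_on_def by blast
next
  assume "\<forall>y \<in> B. \<exists>!x. x \<in> A \<and> f x = y"
  then have "inj_on f A" "B \<subseteq> f ` A"
    using assms unfolding inj_on_def by blast+
  with assms show "bij_betw f A B"
    unfolding bij_betw_def by blast
qed

lemma card_extensional_bijections:
  assumes "finite A" "finite B" "card A = card B"
  shows "card {f \<in> A \<rightarrow>\<^sub>E B. bij_betw f A B} = fact (card A)"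
proof -
  let ?bijs = "{f \<in> A \<rightarrow>\<^sub>E B. bij_betw f A B}"
  obtain h where h: "bij_betw h B A"
    using finite_same_card_bij[OF assms(2,1)] assms(3) by metis
  let ?k = "inv_into B h"
  have k: "bij_betw ?k A B"
    using h by (rule bij_betw_inv_into)
  let ?perm = "\<lambda>f x. if x \<in> A then h (f x) else x"
  have "bij_betw ?perm ?bijs {p. p permutes A}"
  proof (rule bij_betw_byWitness[where f' = "\<lambda>p. restrict (?k \<circ> p) A"])
    show "\<forall>f \<in> ?bijs. restrict (?k \<circ> ?perm f) A = f"
    proof (intro ballI ext)
      fix f x assume "f \<in> ?bijs"
      then have f: "f \<in> A \<rightarrow>\<^sub>E B" by simp
      show "restrict (?k \<circ> ?perm f) A x = f x"
        using bij_betw_inv_into_left[OF h] PiE_mem[OF f] PiE_arb[OF f] by auto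
    qed
    show "\<forall>p \<in> {p. p permutes A}. ?perm (restrict (?k \<circ> p) A) = p"
    proof (intro ballI ext)
      fix p x assume "p \<in> {p. p permutes A}"
      then have p: "p permutes A" by simp
      show "?perm (restrict (?k \<circ> p) A) x = p x"
        using bij_betw_inv_into_right[OF h] permutes_in_image[OF p] permutes_not_in[OF p] by auto
    qed
    show "?perm ` ?bijs \<subseteq> {p. p permutes A}"
    proof (rule image_subsetI)
      fix f assume "f \<in> ?bijs"
      then have "bij_betw (h \<circ> f) A A"
        using h by (blast intro: bij_betw_trans)
      then have "bij_betw (?perm f) A A"
        by (rule bij_betw_cong[THEN iffD1, rotated]) simp
      then show "?perm f \<in> {p. p permutes A}"
        by (auto intro: bij_imp_permutes)
    qed
    show "(\<lambda>p. restrict (?k \<circ> p) A) ` {p. p permutes A} \<subseteq> ?bijs"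
    proof (rule image_subsetI)
      fix p assume "p \<in> {p. p permutes A}"
      then have "bij_betw (?k \<circ> p) A B"
        using k by (blast intro: permutes_imp_bij bij_betw_trans)
      then show "restrict (?k \<circ> p) A \<in> ?bijs"
        by (simp add: bij_betw_imp_funcset)
    qed
  qed
  then have "card ?bijs = card {p. p permutes A}"
    by (rule bij_betw_same_card)
  also have "\<dots> = fact (card A)"
    by (rule card_permutations[OF refl assms(1)])
  finally show ?thesis .
qed

lemma card_dvd_if_uniform_orbits:
  assumes "finite D"
    and self: "\<And>x. x \<in> D \<Longrightarrow> x \<in> orbit x"
    and closed: "\<And>x. x \<in> D \<Longrightarrow> orbit x \<subseteq> D"
    and orbit_card: "\<And>x. x \<in> D \<Longrightarrow> card (orbit x) = k"
    and same: "\<And>x y. x \<in> D \<Longrightarrow> y \<in> orbit x \<Longrightarrow> orbit y = orbit x"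
  shows "k dvd card D"
proof -
  have union: "\<Union>(orbit ` D) = D"
    using self closed by blast
  have disjoint: "orbit x \<inter> orbit y = {}" if "x \<in> D" "y \<in> D" "orbit x \<noteq> orbit y" for x y
  proof (rule ccontr)
    assume "orbit x \<inter> orbit y \<noteq> {}"
    then obtain z where "z \<in> orbit x" "z \<in> orbit y" by blast
    then show False
      using same that by metis
  qed
  have "k * card (orbit ` D) = card (\<Union>(orbit ` D))"
  proof (rule card_partition)
    show "finite (orbit ` D)" "finite (\<Union>(orbit ` D))"
      using \<open>finite D\<close> union by simp_all
    show "\<And>c. c \<in> orbit ` D \<Longrightarrow> card c = k"
      using orbit_card by blast
    show "\<And>c1 c2. c1 \<in> orbit ` D \<Longrightarrow> c2 \<in> orbit ` D \<Longrightarrow> c1 \<noteq> c2 \<Longrightarrow> c1 \<inter> c2 = {}"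
      using disjoint by blast
  qed
  with union show ?thesis
    by (metis dvd_triv_left)
qed

lemma rankings_subset_PiE: "rankings n \<subseteq> {0..<n} \<rightarrow>\<^sub>E {1..n}"
  unfolding rankings_def by blast

lemma finite_profiles: "finite (profiles n)"
proof -
  have "finite (rankings n)"
    using rankings_subset_PiE by (rule finite_subset) (simp add: finite_PiE)
  then show ?thesis
    unfolding profiles_def by (simp add: finite_PiE)
qed

lemma profile_rankings:
  assumes "P \<in> profiles n" "i < n"
  shows "fst P i \<in> rankings n" "snd P i \<in> rankings n"
  using assms unfolding profiles_def by (auto simp: mem_Times_iff)

lemma mutual_ranking_mem:
  assumes "P \<in> profiles n" "i < n" "j < n"
  shows "mutual_ranking P i j \<in> {1..n} \<times> {1..n}"
proof -
  have ranks: "fst P i \<in> {0..<n} \<rightarrow>\<^sub>E {1..n}" "snd P j \<in> {0..<n} \<rightarrow>\<^sub>E {1..n}"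
    using profile_rankings[OF assms(1)] assms(2,3) rankings_subset_PiE by blast+
  show ?thesis
    using PiE_mem[OF ranks(1), of j] PiE_mem[OF ranks(2), of i] assms(2,3)
    by (simp add: mutual_ranking_def)
qed

lemma profile_eqI:
  assumes "P \<in> profiles n" "Q \<in> profiles n"
    and "\<And>i j. i < n \<Longrightarrow> j < n \<Longrightarrow> mutual_ranking P i j = mutual_ranking Q i j"
  shows "P = Q"
proof -
  have "fst P i = fst Q i \<and> snd P i = snd Q i" if "i < n" for i
  proof -
    have "fst P i \<in> {0..<n} \<rightarrow>\<^sub>E {1..n}" "fst Q i \<in> {0..<n} \<rightarrow>\<^sub>E {1..n}"
      "snd P i \<in> {0..<n} \<rightarrow>\<^sub>E {1..n}" "snd Q i \<in> {0..<n} \<rightarrow>\<^sub>E {1..n}"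
      using profile_rankings assms(1,2) that rankings_subset_PiE by blast+
    then show ?thesis
      using assms(3) that unfolding mutual_ranking_def by (metis PiE_ext atLeastLessThan_iff prod.inject)
  qed
  moreover have "fst P \<in> {0..<n} \<rightarrow>\<^sub>E rankings n" "fst Q \<in> {0..<n} \<rightarrow>\<^sub>E rankings n"
    "snd P \<in> {0..<n} \<rightarrow>\<^sub>E rankings n" "snd Q \<in> {0..<n} \<rightarrow>\<^sub>E rankings n"
    using assms(1,2) unfolding profiles_def by (auto simp: mem_Times_iff)
  ultimately show ?thesis
    by (metis PiE_ext atLeastLessThan_iff prod_eqI)
qed

lemma disjoint_profile_iff_bij_betw:
  assumes "P \<in> profiles n"
  shows "disjoint_profile n P \<longleftrightarrow>
    bij_betw (case_prod (mutual_ranking P)) ({0..<n} \<times> {0..<n}) ({1..n} \<times> {1..n})"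
proof -
  have "case_prod (mutual_ranking P) ` ({0..<n} \<times> {0..<n}) \<subseteq> {1..n} \<times> {1..n}"
  proof (rule image_subsetI)
    fix ij assume "ij \<in> {0..<n} \<times> {0..<n}"
    then show "case_prod (mutual_ranking P) ij \<in> {1..n} \<times> {1..n}"
      using mutual_ranking_mem[OF assms] by (cases ij) simp
  qed
  then show ?thesis
    by (simp add: disjoint_profile_def bij_betw_iff_ex1)
qed

lemma card_disjoint_profiles_le: "card {P \<in> profiles n. disjoint_profile n P} \<le> fact (n\<^sup>2)"
proof -
  let ?D = "{P \<in> profiles n. disjoint_profile n P}"
  let ?grid = "{0..<n} \<times> {0..<n}" and ?pairs = "{1..n} \<times> {1..n}"
  let ?table = "\<lambda>P. restrict (case_prod (mutual_ranking P)) ?grid"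
  have "inj_on ?table ?D"
  proof (rule inj_onI)
    fix P Q assume P: "P \<in> ?D" and Q: "Q \<in> ?D" and eq: "?table P = ?table Q"
    show "P = Q"
    proof (rule profile_eqI)
      fix i j assume "i < n" "j < n"
      then show "mutual_ranking P i j = mutual_ranking Q i j"
        using fun_cong[OF eq, of "(i, j)"] by simp
    qed (use P Q in simp_all)
  qed
  moreover have "?table ` ?D \<subseteq> {f \<in> ?grid \<rightarrow>\<^sub>E ?pairs. bij_betw f ?grid ?pairs}"
  proof (rule image_subsetI)
    fix P assume "P \<in> ?D"
    then have "bij_betw (case_prod (mutual_ranking P)) ?grid ?pairs"
      using disjoint_profile_iff_bij_betw by blast
    then show "?table P \<in> {f \<in> ?grid \<rightarrow>\<^sub>E ?pairs. bij_betw f ?grid ?pairs}"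
      by (simp add: bij_betw_imp_funcset)
  qed
  moreover have "finite {f \<in> ?grid \<rightarrow>\<^sub>E ?pairs. bij_betw f ?grid ?pairs}"
    by (simp add: finite_PiE)
  ultimately have "card ?D \<le> card {f \<in> ?grid \<rightarrow>\<^sub>E ?pairs. bij_betw f ?grid ?pairs}"
    by (rule card_inj_on_le)
  also have "\<dots> = fact (n\<^sup>2)"
    by (subst card_extensional_bijections) (simp_all add: power2_eq_square)
  finally show ?thesis .
qed

type_synonym profile = "(nat \<Rightarrow> nat \<Rightarrow> nat) \<times> (nat \<Rightarrow> nat \<Rightarrow> nat)"

definition relabel :: "nat \<Rightarrow> (nat \<Rightarrow> nat) \<Rightarrow> (nat \<Rightarrow> nat) \<Rightarrow> profile \<Rightarrow> profile" where
  "relabel n s t P =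
     ((\<lambda>i\<in>{0..<n}. \<lambda>j\<in>{0..<n}. fst P (s i) (t j)), (\<lambda>j\<in>{0..<n}. \<lambda>i\<in>{0..<n}. snd P (t j) (s i)))"

lemma mutual_ranking_relabel:
  "i < n \<Longrightarrow> j < n \<Longrightarrow> mutual_ranking (relabel n s t P) i j = mutual_ranking P (s i) (t j)"
  by (simp add: relabel_def mutual_ranking_def)

lemma ranking_comp_permutes:
  assumes "r \<in> rankings n" "p permutes {0..<n}"
  shows "(\<lambda>j\<in>{0..<n}. r (p j)) \<in> rankings n"
proof -
  have "bij_betw (r \<circ> p) {0..<n} {1..n}"
    using permutes_imp_bij[OF assms(2)] assms(1) unfolding rankings_def
    by (blast intro: bij_betw_trans)
  then show ?thesis
    unfolding rankings_def by (simp add: bij_betw_imp_funcset comp_def)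
qed

lemma relabel_in_profiles:
  assumes "P \<in> profiles n" "s permutes {0..<n}" "t permutes {0..<n}"
  shows "relabel n s t P \<in> profiles n"
proof -
  have "(\<lambda>j\<in>{0..<n}. fst P (s i) (t j)) \<in> rankings n" if "i < n" for i
    using profile_rankings(1)[OF assms(1)] permutes_in_image[OF assms(2)] that assms(3)
    by (simp add: ranking_comp_permutes)
  moreover have "(\<lambda>i\<in>{0..<n}. snd P (t j) (s i)) \<in> rankings n" if "j < n" for j
    using profile_rankings(2)[OF assms(1)] permutes_in_image[OF assms(3)] that assms(2)
    by (simp add: ranking_comp_permutes)
  ultimately show ?thesis
    unfolding relabel_def profiles_def mem_Times_iff fst_conv snd_conv restrict_PiE_iff by simp
qed

lemma relabel_relabel:
  assumes "s' permutes {0..<n}" "t' permutes {0..<n}"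
  shows "relabel n s' t' (relabel n s t P) = relabel n (s \<circ> s') (t \<circ> t') P"
proof -
  have "s' i < n" "t' i < n" if "i < n" for i
    using that permutes_in_image[OF assms(1)] permutes_in_image[OF assms(2)] by auto
  then show ?thesis
    unfolding relabel_def by (auto intro!: restrict_ext)
qed

lemma relabel_id:
  assumes "P \<in> profiles n"
  shows "relabel n id id P = P"
  using relabel_in_profiles[OF assms permutes_id permutes_id] assms
  by (rule profile_eqI) (simp add: mutual_ranking_relabel)

lemma disjoint_profile_relabel:
  assumes "P \<in> profiles n" "disjoint_profile n P" "s permutes {0..<n}" "t permutes {0..<n}"
  shows "disjoint_profile n (relabel n s t P)"
proof -
  let ?grid = "{0..<n} \<times> {0..<n}"
  have "bij_betw (case_prod (mutual_ranking P) \<circ> map_prod s t) ?grid ({1..n} \<times> {1..n})"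
    using bij_betw_map_prod[OF permutes_imp_bij[OF assms(3)] permutes_imp_bij[OF assms(4)]]
      assms(1,2) disjoint_profile_iff_bij_betw by (blast intro: bij_betw_trans)
  then have "bij_betw (case_prod (mutual_ranking (relabel n s t P))) ?grid ({1..n} \<times> {1..n})"
    by (rule bij_betw_cong[THEN iffD1, rotated]) (auto simp: mutual_ranking_relabel)
  then show ?thesis
    using disjoint_profile_iff_bij_betw[OF relabel_in_profiles[OF assms(1,3,4)]] by simp
qed

lemma inj_on_relabel:
  assumes "P \<in> profiles n" "disjoint_profile n P" "0 < n"
  shows "inj_on (\<lambda>(s, t). relabel n s t P) ({s. s permutes {0..<n}} \<times> {t. t permutes {0..<n}})"
proof (rule inj_onI, clarsimp)
  fix s t s' t'
  assume s: "s permutes {0..<n}" and t: "t permutes {0..<n}"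
    and s': "s' permutes {0..<n}" and t': "t' permutes {0..<n}"
    and eq: "relabel n s t P = relabel n s' t' P"
  have inj: "inj_on (case_prod (mutual_ranking P)) ({0..<n} \<times> {0..<n})"
    using assms(1,2) disjoint_profile_iff_bij_betw bij_betw_imp_inj_on by blast
  have agree: "s i = s' i \<and> t j = t' j" if "i < n" "j < n" for i j
  proof -
    have "mutual_ranking P (s i) (t j) = mutual_ranking P (s' i) (t' j)"
      using arg_cong[OF eq, of "\<lambda>Q. mutual_ranking Q i j"] that
      by (simp add: mutual_ranking_relabel)
    then show ?thesis
      using inj_onD[OF inj, of "(s i, t j)" "(s' i, t' j)"] that
        permutes_in_image[OF s] permutes_in_image[OF t]
        permutes_in_image[OF s'] permutes_in_image[OF t'] by auto
  qed
  have "s i = s' i \<and> t i = t' i" for i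
    using agree[of i 0] agree[of 0 i] assms(3) permutes_not_in[OF s] permutes_not_in[OF t]
      permutes_not_in[OF s'] permutes_not_in[OF t'] by (cases "i < n") auto
  then show "s = s' \<and> t = t'"
    by auto
qed

definition relabel_orbit :: "nat \<Rightarrow> profile \<Rightarrow> profile set" where
  "relabel_orbit n P =
     (\<lambda>(s, t). relabel n s t P) ` ({s. s permutes {0..<n}} \<times> {t. t permutes {0..<n}})"

lemma relabel_orbit_subset:
  assumes "Q \<in> relabel_orbit n P"
  shows "relabel_orbit n Q \<subseteq> relabel_orbit n P"
proof
  fix R assume "R \<in> relabel_orbit n Q"
  then obtain s' t' where s't': "s' permutes {0..<n}" "t' permutes {0..<n}"
    and R: "R = relabel n s' t' Q"
    unfolding relabel_orbit_def by auto
  obtain s t where st: "s permutes {0..<n}" "t permutes {0..<n}" and Q: "Q = relabel n s t P"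
    using assms unfolding relabel_orbit_def by auto
  have "R = relabel n (s \<circ> s') (t \<circ> t') P"
    using R Q relabel_relabel[OF s't'] by simp
  moreover have "s \<circ> s' permutes {0..<n}" "t \<circ> t' permutes {0..<n}"
    using st s't' by (simp_all add: permutes_compose)
  ultimately show "R \<in> relabel_orbit n P"
    unfolding relabel_orbit_def by (intro image_eqI[where x = "(s \<circ> s', t \<circ> t')"]) simp_all
qed

lemma relabel_orbit_sym:
  assumes "P \<in> profiles n" "Q \<in> relabel_orbit n P"
  shows "P \<in> relabel_orbit n Q"
proof -
  obtain s t where st: "s permutes {0..<n}" "t permutes {0..<n}" and Q: "Q = relabel n s t P"
    using assms(2) unfolding relabel_orbit_def by auto
  have inv: "inv s permutes {0..<n}" "inv t permutes {0..<n}"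
    using st by (simp_all add: permutes_inv)
  have "relabel n (inv s) (inv t) Q = P"
    using relabel_relabel[OF inv, of s t P] permutes_inv_o(1)[OF st(1)] permutes_inv_o(1)[OF st(2)]
      relabel_id[OF assms(1)] Q by simp
  then show ?thesis
    using inv unfolding relabel_orbit_def by (intro image_eqI[where x = "(inv s, inv t)"]) simp_all
qed

lemma relabel_orbit_eq:
  assumes "P \<in> profiles n" "Q \<in> relabel_orbit n P"
  shows "relabel_orbit n Q = relabel_orbit n P"
  using relabel_orbit_subset[OF assms(2)] relabel_orbit_subset[OF relabel_orbit_sym[OF assms]]
  by (rule antisym)

lemma fact_square_dvd_card_disjoint_profiles:
  assumes "0 < n"
  shows "(fact n)\<^sup>2 dvd card {P \<in> profiles n. disjoint_profile n P}"
proof (rule card_dvd_if_uniform_orbits[where orbit = "relabel_orbit n"])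
  let ?D = "{P \<in> profiles n. disjoint_profile n P}"
  let ?perms = "{s. s permutes {0..<n}}"
  show "finite ?D"
    using finite_profiles by simp
  show "P \<in> relabel_orbit n P" if "P \<in> ?D" for P
    using relabel_id that unfolding relabel_orbit_def
    by (intro image_eqI[where x = "(id, id)"]) (simp_all add: permutes_id)
  show "relabel_orbit n P \<subseteq> ?D" if "P \<in> ?D" for P
    unfolding relabel_orbit_def
  proof (rule image_subsetI)
    fix st assume "st \<in> ?perms \<times> ?perms"
    with that show "(\<lambda>(s, t). relabel n s t P) st \<in> ?D"
      by (cases st) (simp add: relabel_in_profiles disjoint_profile_relabel)
  qed
  show "card (relabel_orbit n P) = (fact n)\<^sup>2" if "P \<in> ?D" for P
  proof -
    have "card (relabel_orbit n P) = card (?perms \<times> ?perms)"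
      unfolding relabel_orbit_def using inj_on_relabel assms that by (simp add: card_image)
    also have "\<dots> = (fact n)\<^sup>2"
      by (simp add: card_cartesian_product card_permutations power2_eq_square)
    finally show ?thesis .
  qed
  show "relabel_orbit n Q = relabel_orbit n P" if "P \<in> ?D" "Q \<in> relabel_orbit n P" for P Q
    using that relabel_orbit_eq by blast
qed

theorem mainTheorem1:
  fixes n :: nat
  assumes "n \<ge> 1"
  shows "card {P \<in> profiles n. disjoint_profile n P} \<le> fact (n^2)
       \<and> (fact n)^2 dvd card {P \<in> profiles n. disjoint_profile n P}"
  using card_disjoint_profiles_le fact_square_dvd_card_disjoint_profiles assms by simp

end
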